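(* Let $N\ge2$, $n\ge1$, $h>0$, $\tau\in\mathbb{Z}_+$, $\alpha,\beta>0$, and let $A=\begin{bmatrix}1&h\\0&1\end{bmatrix}\otimes I_n$, $B=\begin{bmatrix}h^2/2\\ h\end{bmatrix}\otimes I_n$, $K=[\alpha\ \ \beta]\otimes I_n$. Let $\mathcal{G}_c$ be a fixed undirected graph on $\{1,\dots,N\}$ with symmetric $0/1$ adjacency entries $o_{ij}a_{ij}$ ($o_{ii}a_{ii}=0$), with Laplacian $\mathcal{L}_c$ whose eigenvalues are $0=\lambda_1\le\lambda_2\le\dots\le\lambda_N$. Consider agents with states $x_{i,k}\in\mathbb{R}^{2n}$ evolving as $$x_{i,k+1}=Ax_{i,k}+Bu_{i,k}+w_{i,k},\qquad u_{i,k}=K\sum_{j=1}^N o_{ij}a_{ij}\big(\hat x_{j,k}-\hat x_{i,k}\big),$$ where $\hat x_{l,k}=A^k x_{l,0}$ for $0\le k\le\tau-1$ and $\hat x_{l,k}=A^{\,k-(\lfloor k/\tau\rfloor-1)\tau}x_{l,(\lfloor k/\tau\rfloor-1)\tau}$ for $k\ge\tau$, and $w_{i,k}=[(w^p_{i,k})^T,(w^v_{i,k})^T]^T$ is an arbitrary sequence with $\|w^p_{i,k}\|\le r_{w_p}(i)$, $\|w^v_{i,k}\|\le r_{w_v}(i)$. For $i=2,\dots,N$ set $\bar a_0(i)=\lambda_i^2\alpha^2h^4\tau^2(\tau^2-1)/12$, $\bar a_1(i)=\lambda_i\alpha h^2(\tau-2\tau^2)/2-\lambda_i\beta h\tau$,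 $\bar a_2(i)=1+\lambda_i\alpha h^2(4\tau^2-\tau)/2+\lambda_i\beta h\tau$, $\bar a_3(i)=-2$, $\bar a_4(i)=1$, and $\varphi_{1,i}=\bar a_4-|\bar a_0|$, $\varphi_{2,i}=|\bar a_0^2-\bar a_4^2|-|\bar a_0\bar a_3-\bar a_1\bar a_4|$, $\varphi_{3,i}=|(\bar a_0^2-\bar a_4^2)^2-(\bar a_0\bar a_3-\bar a_1\bar a_4)^2|-|-(\bar a_0\bar a_1-\bar a_3\bar a_4)(\bar a_0\bar a_3-\bar a_1\bar a_4)+\bar a_2(\bar a_0+\bar a_4)(\bar a_0-\bar a_4)^2|$ (all $\bar a_\cdot=\bar a_\cdot(i)$). If (i) $\mathcal{G}_c$ is connected and (ii) $\varphi_{1,i}>0,\varphi_{2,i}>0,\varphi_{3,i}>0$ for all $i\in\{2,\dots,N\}$, then for every initial condition and every admissible noise sequence, $\sup_{k\ge0}\|x_{i,k}-x_{j,k}\|<\infty$ for all $i,j$. Equivalently, writing $x_{i,k}=[(p_{i,k}-\Delta_i)^T,v_{i,k}^T]^T$ for any formation vector $(\Delta_1,\dots,\Delta_N)$, there exist finite $\delta_p,\delta_v$ with $\limsup_{k\to\infty}\|p_{i,k}-p_{j,k}-(\Delta_i-\Delta_j)\|\le\delta_p$ and $\limsup_{k\to\infty}\|v_{i,k}-v_{j,k}\|\le\delta_v$ for all $i,j$ (bounded formation stability). *)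

theory Defs
  imports "Jordan_Normal_Form.Char_Poly" "HOL-Analysis.Euclidean_Space"
begin

text \<open>Agents are indexed by 0..<N (paper: 1..N). The state of agent i at time k is
  the pair (position-part, velocity-part) in R^n x R^n, i.e. the paper's vector in R^{2n};
  the product norm is the Euclidean norm of the stacked vector.\<close>

definition Amap :: "real \<Rightarrow> 'a::euclidean_space \<times> 'a \<Rightarrow> 'a \<times> 'a" where
  "Amap h s = (fst s + h *\<^sub>R snd s, snd s)"

definition Bmap :: "real \<Rightarrow> 'a::euclidean_space \<Rightarrow> 'a \<times> 'a" where
  "Bmap h u = ((h^2/2) *\<^sub>R u, h *\<^sub>R u)"

definition Kmap :: "real \<Rightarrow> real \<Rightarrow> 'a::euclidean_space \<times> 'a \<Rightarrow> 'a" where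
  "Kmap \<alpha> \<beta> s = \<alpha> *\<^sub>R fst s + \<beta> *\<^sub>R snd s"

definition xhat :: "nat \<Rightarrow> real \<Rightarrow> (nat \<Rightarrow> nat \<Rightarrow> 'a::euclidean_space \<times> 'a) \<Rightarrow> nat \<Rightarrow> nat \<Rightarrow> 'a \<times> 'a" where
  "xhat \<tau> h x l k =
     (if k < \<tau> then (Amap h ^^ k) (x l 0)
      else (Amap h ^^ (k - (k div \<tau> - 1) * \<tau>)) (x l ((k div \<tau> - 1) * \<tau>)))"

definition ctrl :: "nat \<Rightarrow> (nat \<Rightarrow> nat \<Rightarrow> real) \<Rightarrow> real \<Rightarrow> real \<Rightarrow> nat \<Rightarrow> real
    \<Rightarrow> (nat \<Rightarrow> nat \<Rightarrow> 'a::euclidean_space \<times> 'a) \<Rightarrow> nat \<Rightarrow> nat \<Rightarrow> 'a" where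
  "ctrl N adj \<alpha> \<beta> \<tau> h x i k =
     Kmap \<alpha> \<beta> (\<Sum>j<N. adj i j *\<^sub>R (xhat \<tau> h x j k - xhat \<tau> h x i k))"

definition laplacian :: "nat \<Rightarrow> (nat \<Rightarrow> nat \<Rightarrow> real) \<Rightarrow> real mat" where
  "laplacian N adj = Matrix.mat N N (\<lambda>(i,j). if i = j then (\<Sum>l<N. adj i l) else - adj i j)"

definition graph_connected :: "nat \<Rightarrow> (nat \<Rightarrow> nat \<Rightarrow> real) \<Rightarrow> bool" where
  "graph_connected N adj \<longleftrightarrow>
     (\<forall>i<N. \<forall>j<N. (i, j) \<in> {(a, b). a < N \<and> b < N \<and> adj a b = 1}\<^sup>*)"

definition abar0 :: "real \<Rightarrow> real \<Rightarrow> real \<Rightarrow> real \<Rightarrow> real \<Rightarrow> real" where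
  "abar0 lm \<alpha> \<beta> h \<tau> = lm^2 * \<alpha>^2 * h^4 * \<tau>^2 * (\<tau>^2 - 1) / 12"
definition abar1 :: "real \<Rightarrow> real \<Rightarrow> real \<Rightarrow> real \<Rightarrow> real \<Rightarrow> real" where
  "abar1 lm \<alpha> \<beta> h \<tau> = lm * \<alpha> * h^2 * (\<tau> - 2 * \<tau>^2) / 2 - lm * \<beta> * h * \<tau>"
definition abar2 :: "real \<Rightarrow> real \<Rightarrow> real \<Rightarrow> real \<Rightarrow> real \<Rightarrow> real" where
  "abar2 lm \<alpha> \<beta> h \<tau> = 1 + lm * \<alpha> * h^2 * (4 * \<tau>^2 - \<tau>) / 2 + lm * \<beta> * h * \<tau>"
definition abar3 :: real where "abar3 = -2"
definition abar4 :: real where "abar4 = 1"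

definition phi1 :: "real \<Rightarrow> real \<Rightarrow> real \<Rightarrow> real \<Rightarrow> real \<Rightarrow> real" where
  "phi1 lm \<alpha> \<beta> h \<tau> = abar4 - \<bar>abar0 lm \<alpha> \<beta> h \<tau>\<bar>"
definition phi2 :: "real \<Rightarrow> real \<Rightarrow> real \<Rightarrow> real \<Rightarrow> real \<Rightarrow> real" where
  "phi2 lm \<alpha> \<beta> h \<tau> =
     (let a0 = abar0 lm \<alpha> \<beta> h \<tau>; a1 = abar1 lm \<alpha> \<beta> h \<tau>; a3 = abar3; a4 = abar4
      in \<bar>a0^2 - a4^2\<bar> - \<bar>a0 * a3 - a1 * a4\<bar>)"
definition phi3 :: "real \<Rightarrow> real \<Rightarrow> real \<Rightarrow> real \<Rightarrow> real \<Rightarrow> real" where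
  "phi3 lm \<alpha> \<beta> h \<tau> =
     (let a0 = abar0 lm \<alpha> \<beta> h \<tau>; a1 = abar1 lm \<alpha> \<beta> h \<tau>; a2 = abar2 lm \<alpha> \<beta> h \<tau>;
          a3 = abar3; a4 = abar4
      in \<bar>(a0^2 - a4^2)^2 - (a0 * a3 - a1 * a4)^2\<bar>
         - \<bar>- (a0 * a1 - a3 * a4) * (a0 * a3 - a1 * a4) + a2 * (a0 + a4) * (a0 - a4)^2\<bar>)"

end

theory Submission
  imports Defs "Jordan_Normal_Form.Schur_Decomposition" "HOL-Analysis.Linear_Algebra"
    "HOL-Analysis.Elementary_Normed_Spaces"
begin

text \<open>A Schur triangularization \<open>L = P T Q\<close> of the Laplacian turns the agents into modes
  \<open>z_m = \<Sum>_l Q_{ml} x_l\<close>: mode \<open>m\<close> is the single-agent loop with feedback gain \<open>\<lambda>_m\<close>, driven by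
  the disturbances and by the modes \<open>m' > m\<close>. Sampled once per block of length \<open>\<tau>\<close>, each
  coordinate of a mode satisfies a fourth-order recurrence with characteristic polynomial
  \<open>z^4 - 2 z^3 + abar2 z^2 + abar1 z + abar0\<close>; the conditions \<open>phi1, phi2, phi3 > 0\<close>, together
  with \<open>p(1) > 0\<close> and \<open>p(-1) > 0\<close> which the positive gains provide, are the Schur--Cohn test
  placing its roots in the open unit disc. Bounded forcing therefore gives bounded
  samples, hence bounded modes, and backward induction over \<open>m\<close> bounds all modes with \<open>m \<ge> 1\<close>.
  The mode of the eigenvalue \<open>0\<close> may drift, but by connectivity the first column of \<open>P\<close> is
  constant, so it cancels from every difference \<open>x_i - x_j\<close>.\<close>

section \<open>The Schur--Cohn test for the closed-loop quartic\<close>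

lemma cmod_combination_sq_diff:
  fixes X Y :: complex and a b :: real
  shows "(cmod (of_real a * X + of_real b * Y))^2 - (cmod (of_real a * Y + of_real b * X))^2
       = (a^2 - b^2) * ((cmod X)^2 - (cmod Y)^2)"
  unfolding cmod_power2 by (simp add: algebra_simps power2_eq_square)

text \<open>One Schur--Cohn reduction step, evaluated at a point \<open>z\<close> with \<open>|z| \<ge> 1\<close>: \<open>P\<close> and \<open>Q\<close>
  stand for the values of a real polynomial and of its reduction, \<open>Ps\<close> and \<open>Qs\<close> for the values
  of the reversed polynomials.\<close>

lemma schur_cohn_step:
  fixes z P Ps Q Qs :: complex and a b :: real
  assumes ab: "\<bar>b\<bar> < \<bar>a\<bar>" and reduce: "z * Q = of_real a * P - of_real b * Ps"
    and reduce_rev: "Qs = of_real a * Ps - of_real b * P"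
    and z: "cmod z \<ge> 1" and Q: "Q \<noteq> 0" and QQ: "cmod Qs \<le> cmod Q"
  shows "P \<noteq> 0 \<and> cmod Ps \<le> cmod P"
proof -
  have "\<bar>b\<bar>^2 < \<bar>a\<bar>^2" by (rule power_strict_mono[OF ab]) simp_all
  hence d: "a^2 - b^2 > 0" by simp
  have P: "of_real (a^2 - b^2) * P = of_real a * (z * Q) + of_real b * Qs"
    unfolding reduce reduce_rev by (simp add: algebra_simps power2_eq_square)
  have Ps: "of_real (a^2 - b^2) * Ps = of_real a * Qs + of_real b * (z * Q)"
    unfolding reduce reduce_rev by (simp add: algebra_simps power2_eq_square)
  have zQ: "cmod (z * Q) \<ge> cmod Q" using z by (simp add: norm_mult mult_le_cancel_right1)
  have "(cmod (z * Q))^2 \<ge> (cmod Qs)^2" using zQ QQ by (meson norm_ge_zero order_trans power_mono)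
  hence "(cmod (of_real a * (z * Q) + of_real b * Qs))^2
      - (cmod (of_real a * Qs + of_real b * (z * Q)))^2 \<ge> 0"
    unfolding cmod_combination_sq_diff using d by simp
  hence "(cmod (of_real (a^2 - b^2) * Ps))^2 \<le> (cmod (of_real (a^2 - b^2) * P))^2"
    unfolding P Ps by simp
  hence "(a^2 - b^2)^2 * (cmod Ps)^2 \<le> (a^2 - b^2)^2 * (cmod P)^2"
    by (simp only: norm_mult norm_of_real power_mult_distrib power2_abs)
  hence "(cmod Ps)^2 \<le> (cmod P)^2" using d by simp
  hence le: "cmod Ps \<le> cmod P" by (simp add: power2_le_iff_abs_le)
  have "P \<noteq> 0"
  proof
    assume "P = 0"
    hence "of_real a * (z * Q) = - (of_real b * Qs)" using P by (simp add: add_eq_0_iff)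
    hence "\<bar>a\<bar> * cmod (z * Q) = \<bar>b\<bar> * cmod Qs" by (metis norm_minus_cancel norm_mult norm_of_real)
    also have "\<dots> \<le> \<bar>b\<bar> * cmod (z * Q)" using QQ zQ by (simp add: mult_left_mono)
    finally have "\<bar>a\<bar> * cmod (z * Q) \<le> \<bar>b\<bar> * cmod (z * Q)" .
    moreover have "cmod (z * Q) > 0" using Q zQ by (meson order_less_le_trans zero_less_norm_iff)
    ultimately show False using ab by simp
  qed
  with le show ?thesis by simp
qed

lemma schur_cohn_linear:
  fixes z :: complex and u v :: real
  assumes uv: "\<bar>v\<bar> < \<bar>u\<bar>" and z: "cmod z \<ge> 1"
  shows "of_real u * z + of_real v \<noteq> 0 \<and>
    cmod (of_real v * z + of_real u) \<le> cmod (of_real u * z + of_real v)"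
proof -
  have "\<bar>v\<bar>^2 < \<bar>u\<bar>^2" by (rule power_strict_mono[OF uv]) simp_all
  hence d: "u^2 - v^2 > 0" by simp
  have "(cmod z)^2 \<ge> (cmod (1::complex))^2" using z by simp
  hence "(cmod (of_real u * z + of_real v * 1))^2 - (cmod (of_real u * 1 + of_real v * z))^2 \<ge> 0"
    unfolding cmod_combination_sq_diff using d by simp
  hence "(cmod (of_real v * z + of_real u))^2 \<le> (cmod (of_real u * z + of_real v))^2"
    by (simp add: algebra_simps)
  hence le: "cmod (of_real v * z + of_real u) \<le> cmod (of_real u * z + of_real v)"
    by (simp add: power2_le_iff_abs_le)
  have "cmod (of_real u * z) \<ge> \<bar>u\<bar>" using z by (simp add: norm_mult mult_le_cancel_left1)
  hence "of_real u * z + of_real v \<noteq> 0" using uv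
    by (metis add_eq_0_iff norm_minus_cancel norm_of_real order.strict_trans2 order_less_irrefl)
  with le show ?thesis by simp
qed

lemma schur_cohn_quadratic:
  fixes c0 c1 c2 :: real and z :: complex
  assumes c0: "\<bar>c0\<bar> < \<bar>c2\<bar>" and c1: "\<bar>c1\<bar> < \<bar>c2 + c0\<bar>" and z: "cmod z \<ge> 1"
  shows "of_real c2 * z^2 + of_real c1 * z + of_real c0 \<noteq> 0 \<and>
    cmod (of_real c0 * z^2 + of_real c1 * z + of_real c2)
      \<le> cmod (of_real c2 * z^2 + of_real c1 * z + of_real c0)"
proof -
  have "c2 - c0 \<noteq> 0" using c0 by auto
  hence "\<bar>c2 - c0\<bar> * \<bar>c1\<bar> < \<bar>c2 - c0\<bar> * \<bar>c2 + c0\<bar>" using c1 by simp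
  moreover have "c2 * c1 - c0 * c1 = (c2 - c0) * c1" "c2^2 - c0^2 = (c2 - c0) * (c2 + c0)"
    by (simp_all add: algebra_simps power2_eq_square)
  ultimately have "\<bar>c2 * c1 - c0 * c1\<bar> < \<bar>c2^2 - c0^2\<bar>" by (simp only: abs_mult)
  from schur_cohn_linear[OF this z] have linear:
    "of_real (c2^2 - c0^2) * z + of_real (c2 * c1 - c0 * c1) \<noteq> 0 \<and>
     cmod (of_real (c2 * c1 - c0 * c1) * z + of_real (c2^2 - c0^2))
       \<le> cmod (of_real (c2^2 - c0^2) * z + of_real (c2 * c1 - c0 * c1))" .
  show ?thesis
    by (rule schur_cohn_step[OF c0 _ _ z conjunct1[OF linear] conjunct2[OF linear]])
       (simp_all add: algebra_simps power2_eq_square)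
qed

lemma quartic_nonzero_outside_unit_disc:
  fixes a0 a1 a2 :: real and z :: complex
  assumes h0: "\<bar>a0\<bar> < 1"
    and h1: "\<bar>a1 + 2 * a0\<bar> < \<bar>1 - a0^2\<bar>"
    and h2: "\<bar>(1 - a0^2) * (a2 * (1 - a0)) - (a1 + 2 * a0) * (-2 - a0 * a1)\<bar>
           < \<bar>(1 - a0^2)^2 - (a1 + 2 * a0)^2\<bar>"
    and at_one: "a0 + a1 + a2 - 1 > 0" and at_minus_one: "3 + a2 - a1 + a0 > 0"
    and z: "cmod z \<ge> 1"
  shows "z^4 - 2 * z^3 + of_real a2 * z^2 + of_real a1 * z + of_real a0 \<noteq> 0"
proof -
  define B3 B2 B1 B0 where "B3 = 1 - a0^2" and "B2 = -2 - a0 * a1"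
    and "B1 = a2 * (1 - a0)" and "B0 = a1 + 2 * a0"
  define C2 C1 C0 where "C2 = B3^2 - B0^2" and "C1 = B3 * B2 - B0 * B1" and "C0 = B3 * B1 - B0 * B2"
  have hB: "\<bar>B0\<bar> < \<bar>B3\<bar>" using h1 unfolding B0_def B3_def .
  have hC: "\<bar>C0\<bar> < \<bar>C2\<bar>" using h2 unfolding C0_def C2_def B0_def B1_def B2_def B3_def .
  have "\<bar>B0\<bar>^2 < \<bar>B3\<bar>^2" by (rule power_strict_mono[OF hB]) simp_all
  hence "C2 > 0" unfolding C2_def by simp
  \<comment> \<open>The last Schur--Cohn condition is implied by \<open>p(1) > 0\<close> and \<open>p(-1) > 0\<close>.\<close>
  have "(C2 + C0)^2 - C1^2 = C2 * (1 - a0)^2 * (a0 + a1 + a2 - 1) * (3 + a2 - a1 + a0)"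
    unfolding C2_def C1_def C0_def B0_def B1_def B2_def B3_def
    by (simp add: algebra_simps power2_eq_square)
  also have "\<dots> > 0" using \<open>C2 > 0\<close> h0 at_one at_minus_one by simp
  finally have "\<bar>C1\<bar> < \<bar>C2 + C0\<bar>" using abs_le_square_iff[of "C2 + C0" C1] by linarith
  note quadratic = schur_cohn_quadratic[OF hC this z]
  have cubic: "of_real B3 * z^3 + of_real B2 * z^2 + of_real B1 * z + of_real B0 \<noteq> 0 \<and>
      cmod (of_real B0 * z^3 + of_real B1 * z^2 + of_real B2 * z + of_real B3)
        \<le> cmod (of_real B3 * z^3 + of_real B2 * z^2 + of_real B1 * z + of_real B0)"
    by (rule schur_cohn_step[OF hB _ _ z conjunct1[OF quadratic] conjunct2[OF quadratic]])
       (simp_all add: C2_def C1_def C0_def algebra_simps power2_eq_square power3_eq_cube)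
  have "\<bar>a0\<bar> < \<bar>1\<bar>" using h0 by simp
  have "z^4 - 2 * z^3 + of_real a2 * z^2 + of_real a1 * z + of_real a0 \<noteq> 0 \<and>
      cmod (of_real a0 * z^4 + of_real a1 * z^3 + of_real a2 * z^2 - 2 * z + 1)
        \<le> cmod (z^4 - 2 * z^3 + of_real a2 * z^2 + of_real a1 * z + of_real a0)"
    by (rule schur_cohn_step[OF \<open>\<bar>a0\<bar> < \<bar>1\<bar>\<close> _ _ z conjunct1[OF cubic] conjunct2[OF cubic]])
       (simp_all add: B3_def B2_def B1_def B0_def algebra_simps power2_eq_square power3_eq_cube
          power4_eq_xxxx)
  thus ?thesis by simp
qed

lemma abar_quartic_nonzero_outside_unit_disc:
  fixes lm h \<alpha> \<beta> t :: real and z :: complex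
  assumes t: "t \<ge> 1" and h: "h > 0" and \<alpha>: "\<alpha> > 0" and \<beta>: "\<beta> > 0" and lm: "lm > 0"
    and phi1: "phi1 lm \<alpha> \<beta> h t > 0" and phi2: "phi2 lm \<alpha> \<beta> h t > 0"
    and phi3: "phi3 lm \<alpha> \<beta> h t > 0"
    and z: "cmod z \<ge> 1"
  shows "z^4 - 2 * z^3 + of_real (abar2 lm \<alpha> \<beta> h t) * z^2 + of_real (abar1 lm \<alpha> \<beta> h t) * z
           + of_real (abar0 lm \<alpha> \<beta> h t) \<noteq> 0"
proof -
  define a0 a1 a2 where "a0 = abar0 lm \<alpha> \<beta> h t" and "a1 = abar1 lm \<alpha> \<beta> h t"
    and "a2 = abar2 lm \<alpha> \<beta> h t"
  have h0: "\<bar>a0\<bar> < 1" using phi1 unfolding phi1_def abar4_def a0_def by simp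
  have "\<bar>a0^2 - 1^2\<bar> - \<bar>a0 * (-2) - a1 * 1\<bar> > 0"
    using phi2 unfolding phi2_def abar3_def abar4_def a0_def a1_def Let_def by simp
  moreover have "\<bar>a0 * (-2) - a1 * 1\<bar> = \<bar>a1 + 2 * a0\<bar>" "\<bar>a0^2 - 1^2\<bar> = \<bar>1 - a0^2\<bar>"
    by (simp_all add: abs_minus_commute algebra_simps)
  ultimately have h1: "\<bar>a1 + 2 * a0\<bar> < \<bar>1 - a0^2\<bar>" by linarith
  have "\<bar>(a0^2 - 1^2)^2 - (a0 * (-2) - a1 * 1)^2\<bar>
      - \<bar>- (a0 * a1 - (-2) * 1) * (a0 * (-2) - a1 * 1) + a2 * (a0 + 1) * (a0 - 1)^2\<bar> > 0"
    using phi3 unfolding phi3_def abar3_def abar4_def a0_def a1_def a2_def Let_def by simp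
  moreover have "(a0^2 - 1^2)^2 - (a0 * (-2) - a1 * 1)^2 = (1 - a0^2)^2 - (a1 + 2 * a0)^2"
    "- (a0 * a1 - (-2) * 1) * (a0 * (-2) - a1 * 1) + a2 * (a0 + 1) * (a0 - 1)^2
      = (1 - a0^2) * (a2 * (1 - a0)) - (a1 + 2 * a0) * (-2 - a0 * a1)"
    by (simp_all add: algebra_simps power2_eq_square)
  ultimately have h2: "\<bar>(1 - a0^2) * (a2 * (1 - a0)) - (a1 + 2 * a0) * (-2 - a0 * a1)\<bar>
      < \<bar>(1 - a0^2)^2 - (a1 + 2 * a0)^2\<bar>" by linarith
  have "1 \<le> t^2" using t by (simp add: one_le_power)
  hence a0: "a0 \<ge> 0" unfolding a0_def abar0_def by (intro divide_nonneg_pos mult_nonneg_nonneg) auto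
  have "a0 + a1 + a2 - 1 = a0 + lm * \<alpha> * h^2 * t^2"
    unfolding a0_def a1_def a2_def abar1_def abar2_def by (simp add: field_simps power2_eq_square)
  moreover have "lm * \<alpha> * h^2 * t^2 > 0" using lm \<alpha> h t by simp
  ultimately have at_one: "a0 + a1 + a2 - 1 > 0" using a0 by linarith
  have "3 + a2 - a1 + a0 = 4 + lm * \<alpha> * h^2 * (t * (3 * t - 1)) + 2 * lm * \<beta> * h * t + a0"
    unfolding a0_def a1_def a2_def abar1_def abar2_def by (simp add: field_simps power2_eq_square)
  moreover have "lm * \<alpha> * h^2 * (t * (3 * t - 1)) > 0" "2 * lm * \<beta> * h * t > 0"
    using lm \<alpha> \<beta> h t by simp_all
  ultimately have at_minus_one: "3 + a2 - a1 + a0 > 0" using a0 by linarith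
  show ?thesis
    using quartic_nonzero_outside_unit_disc[OF h0 h1 h2 at_one at_minus_one z]
    unfolding a0_def a1_def a2_def .
qed

section \<open>Bounded solutions of stable linear recurrences\<close>

lemma Bseq_plus:
  fixes f g :: "nat \<Rightarrow> 'a::real_normed_vector"
  shows "Bseq f \<Longrightarrow> Bseq g \<Longrightarrow> Bseq (\<lambda>n. f n + g n)"
  by (simp add: Bseq_eq_bounded bounded_plus_comp)

lemma Bseq_diff:
  fixes f g :: "nat \<Rightarrow> 'a::real_normed_vector"
  shows "Bseq f \<Longrightarrow> Bseq g \<Longrightarrow> Bseq (\<lambda>n. f n - g n)"
  by (simp add: Bseq_eq_bounded bounded_minus_comp)

lemma Bseq_bounded_linear:
  fixes f :: "nat \<Rightarrow> 'a::real_normed_vector"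
  assumes "bounded_linear L" and "Bseq f"
  shows "Bseq (\<lambda>n. L (f n))"
  using bounded_linear_image[of "range f" L] assms by (simp add: Bseq_eq_bounded image_image)

lemma Bseq_scaleR:
  fixes f :: "nat \<Rightarrow> 'a::real_normed_vector"
  shows "Bseq f \<Longrightarrow> Bseq (\<lambda>n. c *\<^sub>R f n)"
  by (rule Bseq_bounded_linear[OF bounded_linear_scaleR_right])

lemma Bseq_mult_left:
  fixes f :: "nat \<Rightarrow> real"
  shows "Bseq f \<Longrightarrow> Bseq (\<lambda>n. c * f n)"
  using Bseq_scaleR[of f c] by simp

lemma Bseq_sum:
  fixes f :: "'i \<Rightarrow> nat \<Rightarrow> 'a::real_normed_vector"
  assumes "finite I" and "\<And>i. i \<in> I \<Longrightarrow> Bseq (f i)"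
  shows "Bseq (\<lambda>n. \<Sum>i\<in>I. f i n)"
  using assms by (induction I rule: finite_induct) (simp_all add: Bseq_plus)

lemma Bseq_residue_classes:
  fixes u :: "nat \<Rightarrow> 'a::real_normed_vector"
  assumes "0 < \<tau>" and "\<And>s. s < \<tau> \<Longrightarrow> Bseq (\<lambda>n. u (n * \<tau> + s))"
  shows "Bseq u"
proof -
  have classes: "bounded (range (\<lambda>n. u (n * \<tau> + s)))" if "s < \<tau>" for s
    using assms(2)[OF that] by (simp add: Bseq_eq_bounded)
  have "range u \<subseteq> (\<Union>s<\<tau>. range (\<lambda>n. u (n * \<tau> + s)))"
  proof
    fix y assume "y \<in> range u"
    then obtain k where "y = u k" by blast
    moreover have "u k \<in> range (\<lambda>n. u (n * \<tau> + k mod \<tau>))"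
      by (rule image_eqI[where x = "k div \<tau>"]) simp_all
    ultimately show "y \<in> (\<Union>s<\<tau>. range (\<lambda>n. u (n * \<tau> + s)))"
      using mod_less_divisor[OF assms(1)] by blast
  qed
  moreover have "bounded (\<Union>s<\<tau>. range (\<lambda>n. u (n * \<tau> + s)))"
    using classes by (intro bounded_UN) auto
  ultimately show ?thesis by (simp add: Bseq_eq_bounded bounded_subset)
qed

text \<open>\<open>shift_eval p u\<close> is \<open>p(E) u\<close> for the forward shift \<open>E u = (\<lambda>n. u (n + 1))\<close>.\<close>

definition shift_eval :: "'a::comm_ring_1 poly \<Rightarrow> (nat \<Rightarrow> 'a) \<Rightarrow> nat \<Rightarrow> 'a" where
  "shift_eval p u n = (\<Sum>i\<le>degree p. coeff p i * u (n + i))"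

lemma shift_eval_eq_sum:
  "degree p \<le> K \<Longrightarrow> shift_eval p u n = (\<Sum>i\<le>K. coeff p i * u (n + i))"
  unfolding shift_eval_def by (rule sum.mono_neutral_left) (auto simp: coeff_eq_0)

lemma shift_eval_linear_factor:
  "shift_eval ([:-r, 1:] * q) u n = shift_eval q u (Suc n) - r * shift_eval q u n"
proof -
  let ?d = "degree q"
  have factor: "[:-r, 1:] * q = Polynomial.smult (-r) q + pCons 0 q" by simp
  have "degree [:-r, 1:] = 1" by simp
  hence "degree ([:-r, 1:] * q) \<le> Suc ?d" using degree_mult_le[of "[:-r, 1:]" q] by linarith
  hence "shift_eval ([:-r, 1:] * q) u n = (\<Sum>i\<le>Suc ?d. coeff ([:-r, 1:] * q) i * u (n + i))"
    by (rule shift_eval_eq_sum)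
  also have "\<dots> = (\<Sum>i\<le>Suc ?d. (-r) * (coeff q i * u (n + i)))
      + (\<Sum>i\<le>Suc ?d. coeff (pCons 0 q) i * u (n + i))"
    unfolding factor by (simp add: sum_subtractf sum_negf algebra_simps)
  also have "(\<Sum>i\<le>Suc ?d. (-r) * (coeff q i * u (n + i))) = - r * shift_eval q u n"
    by (simp only: sum_distrib_left[symmetric] shift_eval_eq_sum[of q "Suc ?d" u n, OF le_SucI[OF order_refl]])
  also have "(\<Sum>i\<le>Suc ?d. coeff (pCons 0 q) i * u (n + i)) = shift_eval q u (Suc n)"
    by (subst sum.atMost_Suc_shift) (simp add: shift_eval_def)
  finally show ?thesis by simp
qed

lemma Bseq_first_order_recurrence:
  fixes v :: "nat \<Rightarrow> 'a::real_normed_div_algebra"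
  assumes r: "norm r < 1" and forcing: "Bseq (\<lambda>n. v (Suc n) - r * v n)"
  shows "Bseq v"
proof -
  from forcing obtain E where E: "\<And>n. norm (v (Suc n) - r * v n) \<le> E" by (auto simp: Bseq_def)
  define B where "B = max (norm (v 0)) (E / (1 - norm r))"
  have "E / (1 - norm r) \<le> B" by (simp add: B_def)
  hence "E \<le> B * (1 - norm r)" using r by (simp add: pos_divide_le_eq)
  have "norm (v n) \<le> B" for n
  proof (induction n)
    case 0 thus ?case by (simp add: B_def)
  next
    case (Suc n)
    have "norm (v (Suc n)) \<le> norm (r * v n) + norm (v (Suc n) - r * v n)"
      by (rule norm_triangle_sub)
    also have "\<dots> \<le> norm r * B + E"
      using Suc E by (intro add_mono) (simp_all add: norm_mult mult_left_mono)
    also have "\<dots> \<le> B" using \<open>E \<le> B * (1 - norm r)\<close> by (simp add: algebra_simps)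
    finally show ?case .
  qed
  thus ?thesis by (rule BseqI')
qed

lemma Bseq_linear_factors_recurrence:
  fixes u :: "nat \<Rightarrow> 'a::real_normed_field"
  assumes "\<forall>r\<in>set rs. norm r < 1" and "Bseq (shift_eval (\<Prod>r\<leftarrow>rs. [:-r, 1:]) u)"
  shows "Bseq u"
  using assms
proof (induction rs)
  case Nil
  thus ?case by (simp add: shift_eval_def)
next
  case (Cons r rs)
  let ?v = "shift_eval (\<Prod>r\<leftarrow>rs. [:-r, 1:]) u"
  have "shift_eval (\<Prod>r\<leftarrow>r # rs. [:-r, 1:]) u = (\<lambda>n. ?v (Suc n) - r * ?v n)"
    by (rule ext) (simp only: list.map prod_list.Cons shift_eval_linear_factor)
  hence "Bseq (\<lambda>n. ?v (Suc n) - r * ?v n)" using Cons.prems(2) by simp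
  moreover have "norm r < 1" using Cons.prems(1) by simp
  ultimately have "Bseq ?v" using Bseq_first_order_recurrence by blast
  thus ?case using Cons.IH Cons.prems(1) by simp
qed

lemma Bseq_stable_recurrence:
  fixes p :: "complex poly" and u :: "nat \<Rightarrow> complex"
  assumes monic: "lead_coeff p = 1" and stable: "\<And>z. poly p z = 0 \<Longrightarrow> cmod z < 1"
    and forcing: "Bseq (shift_eval p u)"
  shows "Bseq u"
proof -
  obtain rs where "Polynomial.smult (lead_coeff p) (\<Prod>r\<leftarrow>rs. [:-r, 1:]) = p"
    using fundamental_theorem_algebra_factorized by blast
  hence p: "p = (\<Prod>r\<leftarrow>rs. [:-r, 1:])" using monic by simp
  have "\<forall>r\<in>set rs. cmod r < 1"
  proof
    fix r assume "r \<in> set rs"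
    hence "poly p r = 0" unfolding p by (induction rs) auto
    thus "cmod r < 1" by (rule stable)
  qed
  thus ?thesis using forcing unfolding p by (rule Bseq_linear_factors_recurrence)
qed

lemma Bseq_real_quartic_recurrence:
  fixes s g :: "nat \<Rightarrow> real" and a0 a1 a2 :: real
  assumes stable: "\<And>z::complex. cmod z \<ge> 1 \<Longrightarrow>
      z^4 - 2 * z^3 + of_real a2 * z^2 + of_real a1 * z + of_real a0 \<noteq> 0"
    and recurrence: "\<And>n. s (n + 4) - 2 * s (n + 3) + a2 * s (n + 2) + a1 * s (n + 1) + a0 * s n = g n"
    and forcing: "Bseq g"
  shows "Bseq s"
proof -
  define p where "p = [:complex_of_real a0, of_real a1, of_real a2, -2, 1:]"
  define u where "u n = complex_of_real (s n)" for n
  have poly_p: "poly p z = z^4 - 2 * z^3 + of_real a2 * z^2 + of_real a1 * z + of_real a0" for z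
    by (simp add: p_def algebra_simps power2_eq_square power3_eq_cube power4_eq_xxxx)
  have p_stable: "poly p z = 0 \<Longrightarrow> cmod z < 1" for z
    using stable[of z] unfolding poly_p by (meson not_less)
  have "shift_eval p u n = of_real (g n)" for n
  proof -
    have "shift_eval p u n
        = of_real (s (n + 4) - 2 * s (n + 3) + a2 * s (n + 2) + a1 * s (n + 1) + a0 * s n)"
      by (simp add: shift_eval_def p_def u_def numeral_eq_Suc algebra_simps)
    thus ?thesis by (simp only: recurrence)
  qed
  hence "Bseq (shift_eval p u)" using forcing by (simp add: Bseq_def)
  moreover have "lead_coeff p = 1" by (simp add: p_def)
  ultimately have "Bseq u" using Bseq_stable_recurrence[OF _ p_stable] by blast
  thus ?thesis by (simp add: Bseq_def u_def)
qed
lemma quartic_recurrence_of_second_order_system: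
  fixes x y f g :: "nat \<Rightarrow> real"
  assumes rec_x: "\<And>m. x (m + 2) = x (m + 1) + c * y (m + 1) - a11 * x m - a12 * y m + f m"
    and rec_y: "\<And>m. y (m + 2) = y (m + 1) - a21 * x m - a22 * y m + g m"
  shows "x (m + 4) - 2 * x (m + 3) + (1 + a11 + a22) * x (m + 2) + (c * a21 - a11 - a22) * x (m + 1)
           + (a11 * a22 - a12 * a21) * x m
         = f (m + 2) - f (m + 1) + a22 * f m + c * g (m + 1) - a12 * g m"
    and "y (m + 4) - 2 * y (m + 3) + (1 + a11 + a22) * y (m + 2) + (c * a21 - a11 - a22) * y (m + 1)
           + (a11 * a22 - a12 * a21) * y m
         = - a21 * f m + g (m + 2) - g (m + 1) + a11 * g m"
proof -
  define Ex where "Ex m = x (m + 2) - x (m + 1) - c * y (m + 1) + a11 * x m + a12 * y m - f m" for m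
  define Ey where "Ey m = y (m + 2) - y (m + 1) + a21 * x m + a22 * y m - g m" for m
  have Ex: "Ex m = 0" and Ey: "Ey m = 0" for m
    using rec_x rec_y unfolding Ex_def Ey_def by simp_all
  have shift: "m + 1 + 2 = m + 3" "m + 2 + 2 = m + 4" "m + 1 + 1 = m + 2" "m + 2 + 1 = m + 3"
    by simp_all
  have "x (m + 4) - 2 * x (m + 3) + (1 + a11 + a22) * x (m + 2) + (c * a21 - a11 - a22) * x (m + 1)
          + (a11 * a22 - a12 * a21) * x m
        - (f (m + 2) - f (m + 1) + a22 * f m + c * g (m + 1) - a12 * g m)
      = Ex (m + 2) - Ex (m + 1) + a22 * Ex m + c * Ey (m + 1) - a12 * Ey m"
    unfolding Ex_def Ey_def shift by (simp add: algebra_simps)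
  thus "x (m + 4) - 2 * x (m + 3) + (1 + a11 + a22) * x (m + 2) + (c * a21 - a11 - a22) * x (m + 1)
          + (a11 * a22 - a12 * a21) * x m
        = f (m + 2) - f (m + 1) + a22 * f m + c * g (m + 1) - a12 * g m"
    by (simp add: Ex Ey)
  have "y (m + 4) - 2 * y (m + 3) + (1 + a11 + a22) * y (m + 2) + (c * a21 - a11 - a22) * y (m + 1)
          + (a11 * a22 - a12 * a21) * y m
        - (- a21 * f m + g (m + 2) - g (m + 1) + a11 * g m)
      = Ey (m + 2) - Ey (m + 1) + a11 * Ey m - a21 * Ex m"
    unfolding Ex_def Ey_def shift by (simp add: algebra_simps)
  thus "y (m + 4) - 2 * y (m + 3) + (1 + a11 + a22) * y (m + 2) + (c * a21 - a11 - a22) * y (m + 1)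
          + (a11 * a22 - a12 * a21) * y m
        = - a21 * f m + g (m + 2) - g (m + 1) + a11 * g m"
    by (simp add: Ex Ey)
qed

section \<open>One decoupled mode\<close>

text \<open>The sample from which the prediction at time \<open>k\<close> is extrapolated: the paper's
  \<open>(\<lfloor>k/\<tau>\<rfloor> - 1) \<tau>\<close>, and \<open>0\<close> during the first block.\<close>

definition last_sample :: "nat \<Rightarrow> nat \<Rightarrow> nat" where
  "last_sample \<tau> k = (if k < \<tau> then 0 else (k div \<tau> - 1) * \<tau>)"

lemma last_sample_in_block:
  assumes "1 \<le> n" and "s < \<tau>"
  shows "last_sample \<tau> (n * \<tau> + s) = (n - 1) * \<tau>"
proof -
  have "(n * \<tau> + s) div \<tau> = n" using assms(2) by simp
  moreover have "\<not> n * \<tau> + s < \<tau>" using assms by (cases n) auto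
  ultimately show ?thesis by (simp add: last_sample_def)
qed

lemma minus_last_sample_less:
  assumes "0 < \<tau>"
  shows "k - last_sample \<tau> k < 2 * \<tau>"
proof (cases "k < \<tau>")
  case True
  thus ?thesis by (simp add: last_sample_def)
next
  case False
  then obtain q where q: "k div \<tau> = Suc q"
    using assms by (cases "k div \<tau>") (auto simp: div_eq_0_iff)
  have "k div \<tau> * \<tau> + k mod \<tau> = k" by (rule div_mult_mod_eq)
  hence "q * \<tau> + \<tau> + k mod \<tau> = k" unfolding q by simp
  moreover have "last_sample \<tau> k = q * \<tau>" using False q by (simp add: last_sample_def)
  ultimately show ?thesis using mod_less_divisor[OF assms, of k] by linarith
qed

text \<open>One coordinate of a decoupled mode: position \<open>p\<close> and velocity \<open>v\<close> under a feedback of gain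
  \<open>\<mu>\<close> (a Laplacian eigenvalue) acting on the prediction \<open>(p_hat, v_hat)\<close> extrapolated from the last
  sample, with disturbances \<open>wp\<close> and \<open>wv\<close>.\<close>

locale sampled_mode =
  fixes \<tau> :: nat and h \<mu> \<alpha> \<beta> :: real and p v p_hat v_hat wp wv :: "nat \<Rightarrow> real"
  assumes tau_pos: "0 < \<tau>"
    and p_hat: "\<And>k. p_hat k
      = p (last_sample \<tau> k) + real (k - last_sample \<tau> k) * h * v (last_sample \<tau> k)"
    and v_hat: "\<And>k. v_hat k = v (last_sample \<tau> k)"
    and p_step: "\<And>k. p (Suc k)
      = p k + h * v k - \<mu> * (h^2 / 2) * (\<alpha> * p_hat k + \<beta> * v_hat k) + wp k"
    and v_step: "\<And>k. v (Suc k) = v k - \<mu> * h * (\<alpha> * p_hat k + \<beta> * v_hat k) + wv k"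
begin

text \<open>\<open>fb_xy s\<close> is the influence, accumulated over the first \<open>s\<close> steps of a block, of the sample of
  \<open>y\<close> taken one block earlier on \<open>x\<close>.\<close>

definition fb_pp :: "nat \<Rightarrow> real" where
  "fb_pp s = \<mu> * h^2 * \<alpha> * real s^2 / 2"

definition fb_pv :: "nat \<Rightarrow> real" where
  "fb_pv s = \<mu> * h^2 * (\<alpha> * real \<tau> * h * real s^2 / 2
      + \<alpha> * h * real s * (real s - 1) * (2 * real s - 1) / 12 + \<beta> * real s^2 / 2)"

definition fb_vp :: "nat \<Rightarrow> real" where
  "fb_vp s = \<mu> * h * \<alpha> * real s"

definition fb_vv :: "nat \<Rightarrow> real" where
  "fb_vv s = \<mu> * h * (\<alpha> * h * (real \<tau> * real s + real s * (real s - 1) / 2) + \<beta> * real s)"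

definition p_noise :: "nat \<Rightarrow> nat \<Rightarrow> real" where
  "p_noise n s = (\<Sum>t<s. wp (n * \<tau> + t) + (real s - 1 - real t) * h * wv (n * \<tau> + t))"

definition v_noise :: "nat \<Rightarrow> nat \<Rightarrow> real" where
  "v_noise n s = (\<Sum>t<s. wv (n * \<tau> + t))"

lemma p_noise_Suc: "p_noise n (Suc s) = p_noise n s + h * v_noise n s + wp (n * \<tau> + s)"
proof -
  have "p_noise n (Suc s) = (\<Sum>t<s. (wp (n * \<tau> + t) + (real s - 1 - real t) * h * wv (n * \<tau> + t))
      + h * wv (n * \<tau> + t)) + wp (n * \<tau> + s)"
    unfolding p_noise_def by (simp add: algebra_simps)
  thus ?thesis by (simp add: p_noise_def v_noise_def sum.distrib sum_distrib_left)
qed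

lemma v_noise_Suc: "v_noise n (Suc s) = v_noise n s + wv (n * \<tau> + s)"
  by (simp add: v_noise_def)

lemma noise_Bseq:
  assumes "Bseq wp" and "Bseq wv"
  shows "Bseq (\<lambda>n. p_noise n s)" and "Bseq (\<lambda>n. v_noise n s)"
proof -
  have shifted: "Bseq (\<lambda>n. wp (j n))" "Bseq (\<lambda>n. wv (j n))" for j
    using assms by (simp_all add: Bseq_subseq)
  show "Bseq (\<lambda>n. p_noise n s)" "Bseq (\<lambda>n. v_noise n s)"
    unfolding p_noise_def v_noise_def
    by (rule Bseq_sum finite_lessThan Bseq_plus Bseq_mult_left shifted)+
qed

text \<open>Within a block the prediction is frozen at the sample taken one block earlier, so the
  block can be solved explicitly.\<close>

lemma block_solution:
  assumes n: "1 \<le> n"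
  shows "s \<le> \<tau> \<Longrightarrow>
    p (n * \<tau> + s) = p (n * \<tau>) + real s * h * v (n * \<tau>)
      - fb_pp s * p ((n - 1) * \<tau>) - fb_pv s * v ((n - 1) * \<tau>) + p_noise n s \<and>
    v (n * \<tau> + s) = v (n * \<tau>) - fb_vp s * p ((n - 1) * \<tau>) - fb_vv s * v ((n - 1) * \<tau>)
      + v_noise n s"
proof (induction s)
  case 0
  thus ?case by (simp add: fb_pp_def fb_pv_def fb_vp_def fb_vv_def p_noise_def v_noise_def)
next
  case (Suc s)
  hence s: "s < \<tau>" by simp
  note IH = conjunct1[OF Suc.IH[OF less_imp_le[OF s]]] conjunct2[OF Suc.IH[OF less_imp_le[OF s]]]
  let ?k = "n * \<tau> + s"
  obtain n' where n': "n = Suc n'" using n by (cases n) auto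
  have "?k - (n - 1) * \<tau> = \<tau> + s" by (simp add: n')
  hence hat: "p_hat ?k = p ((n - 1) * \<tau>) + real (\<tau> + s) * h * v ((n - 1) * \<tau>)"
    "v_hat ?k = v ((n - 1) * \<tau>)"
    by (simp_all add: p_hat v_hat last_sample_in_block[OF n s])
  have step: "p (n * \<tau> + Suc s)
      = p ?k + h * v ?k - \<mu> * (h^2 / 2) * (\<alpha> * p_hat ?k + \<beta> * v_hat ?k) + wp ?k"
    "v (n * \<tau> + Suc s) = v ?k - \<mu> * h * (\<alpha> * p_hat ?k + \<beta> * v_hat ?k) + wv ?k"
    using p_step[of ?k] v_step[of ?k] by simp_all
  show ?case
    unfolding step hat IH p_noise_Suc v_noise_Suc
    by (simp add: fb_pp_def fb_pv_def fb_vp_def fb_vv_def field_simps power2_eq_square)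
qed

lemma sampled_Bseq:
  assumes h: "h > 0" and \<alpha>: "\<alpha> > 0" and \<beta>: "\<beta> > 0" and \<mu>: "\<mu> > 0"
    and phi1: "phi1 \<mu> \<alpha> \<beta> h \<tau> > 0" and phi2: "phi2 \<mu> \<alpha> \<beta> h \<tau> > 0"
    and phi3: "phi3 \<mu> \<alpha> \<beta> h \<tau> > 0"
    and noise: "Bseq wp" "Bseq wv"
  shows "Bseq (\<lambda>m. p (m * \<tau>)) \<and> Bseq (\<lambda>m. v (m * \<tau>))"
proof -
  define f g where "f m = p_noise (m + 1) \<tau>" and "g m = v_noise (m + 1) \<tau>" for m
  have "p ((m + 2) * \<tau>) = p ((m + 1) * \<tau>) + real \<tau> * h * v ((m + 1) * \<tau>)
          - fb_pp \<tau> * p (m * \<tau>) - fb_pv \<tau> * v (m * \<tau>) + f m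
      \<and> v ((m + 2) * \<tau>) = v ((m + 1) * \<tau>) - fb_vp \<tau> * p (m * \<tau>) - fb_vv \<tau> * v (m * \<tau>) + g m"
    for m
  proof -
    have e: "(m + 1) * \<tau> + \<tau> = (m + 2) * \<tau>" "m + 1 - 1 = m" by (simp_all add: algebra_simps)
    show ?thesis using block_solution[of "m + 1" \<tau>] unfolding e by (simp add: f_def g_def)
  qed
  note quartic = quartic_recurrence_of_second_order_system[where x = "\<lambda>m. p (m * \<tau>)"
      and y = "\<lambda>m. v (m * \<tau>)", OF conjunct1[OF this] conjunct2[OF this]]
  \<comment> \<open>The \<open>abar\<close> are the coefficients of the characteristic polynomial of the sampled system.\<close>
  have coeffs: "1 + fb_pp \<tau> + fb_vv \<tau> = abar2 \<mu> \<alpha> \<beta> h \<tau>"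
    "real \<tau> * h * fb_vp \<tau> - fb_pp \<tau> - fb_vv \<tau> = abar1 \<mu> \<alpha> \<beta> h \<tau>"
    "fb_pp \<tau> * fb_vv \<tau> - fb_pv \<tau> * fb_vp \<tau> = abar0 \<mu> \<alpha> \<beta> h \<tau>"
    unfolding fb_pp_def fb_pv_def fb_vp_def fb_vv_def abar0_def abar1_def abar2_def
    by (simp_all add: field_simps power2_eq_square power4_eq_xxxx)
  have stable: "cmod z \<ge> 1 \<Longrightarrow> z^4 - 2 * z^3 + of_real (abar2 \<mu> \<alpha> \<beta> h \<tau>) * z^2
      + of_real (abar1 \<mu> \<alpha> \<beta> h \<tau>) * z + of_real (abar0 \<mu> \<alpha> \<beta> h \<tau>) \<noteq> 0" for z
    using abar_quartic_nonzero_outside_unit_disc[OF _ h \<alpha> \<beta> \<mu> phi1 phi2 phi3] tau_pos by simp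
  have f: "Bseq (\<lambda>m. f (m + j))" and g: "Bseq (\<lambda>m. g (m + j))" for j
    unfolding f_def g_def
    using Bseq_ignore_initial_segment[OF noise_Bseq(1)[OF noise], of "j + 1"]
      Bseq_ignore_initial_segment[OF noise_Bseq(2)[OF noise], of "j + 1"]
    by (simp_all add: add.assoc)
  have "Bseq f" "Bseq g" using f[of 0] g[of 0] by simp_all
  have "Bseq (\<lambda>m. f (m + 2) - f (m + 1) + fb_vv \<tau> * f m + real \<tau> * h * g (m + 1) - fb_pv \<tau> * g m)"
    by (rule Bseq_plus Bseq_diff Bseq_mult_left f g \<open>Bseq f\<close> \<open>Bseq g\<close>)+
  from Bseq_real_quartic_recurrence[where s = "\<lambda>m. p (m * \<tau>)", OF _ quartic(1)[unfolded coeffs] this]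
  have "Bseq (\<lambda>m. p (m * \<tau>))" using stable by blast
  moreover have "Bseq (\<lambda>m. - fb_vp \<tau> * f m + g (m + 2) - g (m + 1) + fb_pp \<tau> * g m)"
    by (rule Bseq_plus Bseq_diff Bseq_mult_left f g \<open>Bseq f\<close> \<open>Bseq g\<close>)+
  from Bseq_real_quartic_recurrence[where s = "\<lambda>m. v (m * \<tau>)", OF _ quartic(2)[unfolded coeffs] this]
  have "Bseq (\<lambda>m. v (m * \<tau>))" using stable by blast
  ultimately show ?thesis ..
qed

lemma mode_Bseq:
  assumes h: "h > 0" and \<alpha>: "\<alpha> > 0" and \<beta>: "\<beta> > 0" and \<mu>: "\<mu> > 0"
    and phi1: "phi1 \<mu> \<alpha> \<beta> h \<tau> > 0" and phi2: "phi2 \<mu> \<alpha> \<beta> h \<tau> > 0"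
    and phi3: "phi3 \<mu> \<alpha> \<beta> h \<tau> > 0"
    and noise: "Bseq wp" "Bseq wv"
  shows "Bseq p \<and> Bseq v"
proof -
  have P: "Bseq (\<lambda>m. p (m * \<tau>))" and V: "Bseq (\<lambda>m. v (m * \<tau>))"
    using sampled_Bseq[OF assms] by auto
  have "Bseq (\<lambda>n. p (n * \<tau> + s)) \<and> Bseq (\<lambda>n. v (n * \<tau> + s))" if s: "s < \<tau>" for s
  proof -
    have eq: "p ((n + 1) * \<tau> + s) = p ((n + 1) * \<tau>) + real s * h * v ((n + 1) * \<tau>)
            - fb_pp s * p (n * \<tau>) - fb_pv s * v (n * \<tau>) + p_noise (n + 1) s"
      "v ((n + 1) * \<tau> + s) = v ((n + 1) * \<tau>) - fb_vp s * p (n * \<tau>) - fb_vv s * v (n * \<tau>)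
            + v_noise (n + 1) s" for n
      using block_solution[of "n + 1" s] s by simp_all
    note bounded = P V Bseq_ignore_initial_segment[OF P, of 1] Bseq_ignore_initial_segment[OF V, of 1]
      Bseq_ignore_initial_segment[OF noise_Bseq(1)[OF noise], of 1]
      Bseq_ignore_initial_segment[OF noise_Bseq(2)[OF noise], of 1]
    have "Bseq (\<lambda>n. p ((n + 1) * \<tau> + s))"
      unfolding eq by (rule Bseq_plus Bseq_diff Bseq_mult_left bounded)+
    moreover have "Bseq (\<lambda>n. v ((n + 1) * \<tau> + s))"
      unfolding eq by (rule Bseq_plus Bseq_diff Bseq_mult_left bounded)+
    ultimately show ?thesis
      using Bseq_offset[of "\<lambda>n. p (n * \<tau> + s)" 1] Bseq_offset[of "\<lambda>n. v (n * \<tau> + s)" 1]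
      by simp
  qed
  thus ?thesis using Bseq_residue_classes[OF tau_pos, of p] Bseq_residue_classes[OF tau_pos, of v]
    by blast
qed

end
lemma Amap_pow: "(Amap h ^^ j) y = (fst y + (real j * h) *\<^sub>R snd y, snd y)"
  by (induction j arbitrary: y) (auto simp: Amap_def algebra_simps)

lemma linear_Amap: "linear (Amap h)"
  by (rule linearI) (simp_all add: Amap_def algebra_simps)

lemma linear_Amap_pow: "linear (Amap h ^^ j)"
  by (rule linearI) (simp_all add: Amap_pow algebra_simps)

lemma norm_Amap_pow_le: "norm ((Amap h ^^ j) y) \<le> (2 + real j * \<bar>h\<bar>) * norm y"
proof -
  have fst: "norm (fst y) \<le> norm y" and snd: "norm (snd y) \<le> norm y"
    using norm_fst_le[of "fst y" "snd y"] norm_snd_le[of "snd y" "fst y"] by simp_all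
  have "norm ((Amap h ^^ j) y) \<le> norm (fst y + (real j * h) *\<^sub>R snd y) + norm (snd y)"
    unfolding Amap_pow by (rule norm_Pair_le)
  also have "\<dots> \<le> norm (fst y) + real j * \<bar>h\<bar> * norm (snd y) + norm (snd y)"
    using norm_triangle_ineq[of "fst y" "(real j * h) *\<^sub>R snd y"] by (simp add: abs_mult)
  also have "\<dots> \<le> norm y + real j * \<bar>h\<bar> * norm y + norm y"
    using fst snd by (intro add_mono mult_left_mono) simp_all
  finally show ?thesis by (simp add: algebra_simps)
qed

lemma bounded_linear_feedback:
  "bounded_linear (\<lambda>s::'a::euclidean_space \<times> 'a. Bmap h (Kmap \<alpha> \<beta> s))"
  by (rule linear_conv_bounded_linear[THEN iffD1], rule linearI)
    (simp_all add: Bmap_def Kmap_def algebra_simps)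

definition prediction :: "nat \<Rightarrow> real \<Rightarrow> (nat \<Rightarrow> 'a::euclidean_space \<times> 'a) \<Rightarrow> nat \<Rightarrow> 'a \<times> 'a"
  where "prediction \<tau> h y k = (Amap h ^^ (k - last_sample \<tau> k)) (y (last_sample \<tau> k))"

lemma xhat_eq_prediction: "xhat \<tau> h x l k = prediction \<tau> h (x l) k"
  by (simp add: xhat_def prediction_def last_sample_def)

lemma Bseq_prediction:
  assumes "0 < \<tau>" and "Bseq y"
  shows "Bseq (prediction \<tau> h y)"
proof -
  from \<open>Bseq y\<close> obtain K where K: "\<And>k. norm (y k) \<le> K" by (auto simp: Bseq_def)
  have "norm (prediction \<tau> h y k) \<le> (2 + real (2 * \<tau>) * \<bar>h\<bar>) * K" for k
  proof -
    have "norm (prediction \<tau> h y k)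
        \<le> (2 + real (k - last_sample \<tau> k) * \<bar>h\<bar>) * norm (y (last_sample \<tau> k))"
      unfolding prediction_def by (rule norm_Amap_pow_le)
    also have "\<dots> \<le> (2 + real (2 * \<tau>) * \<bar>h\<bar>) * K"
    proof (rule mult_mono)
      have "real (k - last_sample \<tau> k) \<le> real (2 * \<tau>)"
        using minus_last_sample_less[OF assms(1), of k] by linarith
      thus "2 + real (k - last_sample \<tau> k) * \<bar>h\<bar> \<le> 2 + real (2 * \<tau>) * \<bar>h\<bar>"
        by (simp add: mult_right_mono)
    qed (use K in auto)
    finally show ?thesis .
  qed
  thus ?thesis by (rule BseqI')
qed

lemma Bseq_from_coordinates:
  fixes z :: "nat \<Rightarrow> 'a::euclidean_space \<times> 'a"
  assumes "\<And>e. e \<in> Basis \<Longrightarrow> Bseq (\<lambda>k. fst (z k) \<bullet> e) \<and> Bseq (\<lambda>k. snd (z k) \<bullet> e)"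
  shows "Bseq z"
proof -
  have "Bseq (\<lambda>k. \<Sum>e\<in>Basis. (fst (z k) \<bullet> e) *\<^sub>R (e, 0) + (snd (z k) \<bullet> e) *\<^sub>R (0, e))"
  proof (rule Bseq_sum[OF finite_Basis])
    fix e :: 'a assume "e \<in> Basis"
    with assms have "Bseq (\<lambda>k. fst (z k) \<bullet> e)" "Bseq (\<lambda>k. snd (z k) \<bullet> e)" by simp_all
    thus "Bseq (\<lambda>k. (fst (z k) \<bullet> e) *\<^sub>R (e, 0) + (snd (z k) \<bullet> e) *\<^sub>R (0, e))"
      by (intro Bseq_plus Bseq_bounded_linear[OF bounded_linear_scaleR_left])
  qed
  moreover have "(\<lambda>k. \<Sum>e\<in>Basis. (fst (z k) \<bullet> e) *\<^sub>R (e, 0) + (snd (z k) \<bullet> e) *\<^sub>R (0, e)) = z"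
    by (rule ext) (simp add: prod_eq_iff fst_sum snd_sum euclidean_representation)
  ultimately show ?thesis by simp
qed

lemma Bseq_prod_bounded:
  fixes w :: "nat \<Rightarrow> 'a::real_normed_vector \<times> 'b::real_normed_vector"
  assumes "\<And>k. norm (fst (w k)) \<le> a" and "\<And>k. norm (snd (w k)) \<le> b"
  shows "Bseq w"
proof (rule BseqI')
  fix k
  have "norm (w k) \<le> norm (fst (w k)) + norm (snd (w k))"
    using norm_Pair_le[of "fst (w k)" "snd (w k)"] by simp
  thus "norm (w k) \<le> a + b" using assms[of k] by linarith
qed

lemma Bseq_feedback_mode:
  fixes z \<omega> :: "nat \<Rightarrow> 'a::euclidean_space \<times> 'a"
  assumes \<tau>: "0 < \<tau>" and h: "h > 0" and \<alpha>: "\<alpha> > 0" and \<beta>: "\<beta> > 0" and \<mu>: "\<mu> > 0"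
    and phi1: "phi1 \<mu> \<alpha> \<beta> h \<tau> > 0" and phi2: "phi2 \<mu> \<alpha> \<beta> h \<tau> > 0"
    and phi3: "phi3 \<mu> \<alpha> \<beta> h \<tau> > 0"
    and step: "\<And>k. z (Suc k) = Amap h (z k) - \<mu> *\<^sub>R Bmap h (Kmap \<alpha> \<beta> (prediction \<tau> h z k)) + \<omega> k"
    and noise: "Bseq \<omega>"
  shows "Bseq z"
proof (rule Bseq_from_coordinates)
  fix e :: 'a
  let ?c = "\<lambda>f::'a \<times> 'a \<Rightarrow> 'a. \<lambda>y k. f (y k) \<bullet> e"
  interpret sampled_mode \<tau> h \<mu> \<alpha> \<beta> "?c fst z" "?c snd z" "?c fst (prediction \<tau> h z)"
      "?c snd (prediction \<tau> h z)" "?c fst \<omega>" "?c snd \<omega>"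
    by unfold_locales (simp_all add: \<tau> step prediction_def Amap_pow Amap_def Bmap_def Kmap_def
        inner_add_left inner_diff_left algebra_simps)
  have "Bseq (?c fst \<omega>)" "Bseq (?c snd \<omega>)"
    using Bseq_bounded_linear[OF bounded_linear_compose[OF bounded_linear_inner_left
          bounded_linear_fst] noise]
      Bseq_bounded_linear[OF bounded_linear_compose[OF bounded_linear_inner_left
          bounded_linear_snd] noise]
    by simp_all
  thus "Bseq (\<lambda>k. fst (z k) \<bullet> e) \<and> Bseq (\<lambda>k. snd (z k) \<bullet> e)"
    using mode_Bseq[OF h \<alpha> \<beta> \<mu> phi1 phi2 phi3] by simp
qed

section \<open>Matrix action and the graph Laplacian\<close>

text \<open>\<open>mat_act M y\<close> is \<open>(M \<otimes> I) y\<close>: the matrix \<open>M\<close> acting on a family \<open>y\<close> of vectors.\<close>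

definition mat_act :: "real mat \<Rightarrow> (nat \<Rightarrow> 'b::real_vector) \<Rightarrow> nat \<Rightarrow> 'b" where
  "mat_act M y i = (\<Sum>j<dim_col M. M $$ (i, j) *\<^sub>R y j)"

lemma index_mult_mat_eq_mat_act:
  assumes "A \<in> carrier_mat n k" and "B \<in> carrier_mat k l" and "i < n" and "j < l"
  shows "(A * B) $$ (i, j) = mat_act A (\<lambda>r. B $$ (r, j)) i"
  using assms by (simp add: mat_act_def scalar_prod_def atLeast0LessThan)

lemma mat_act_mult:
  assumes A: "A \<in> carrier_mat n k" and B: "B \<in> carrier_mat k l" and i: "i < n"
  shows "mat_act (A * B) y i = mat_act A (mat_act B y) i"
proof -
  have "mat_act (A * B) y i = (\<Sum>j<l. (\<Sum>r<k. A $$ (i, r) * B $$ (r, j)) *\<^sub>R y j)"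
    using A B i by (simp add: mat_act_def scalar_prod_def atLeast0LessThan)
  also have "\<dots> = (\<Sum>r<k. A $$ (i, r) *\<^sub>R (\<Sum>j<l. B $$ (r, j) *\<^sub>R y j))"
    by (simp add: scaleR_sum_right scaleR_sum_left sum.swap[of _ "{..<k}"])
  also have "\<dots> = mat_act A (mat_act B y) i"
    using A B by (simp add: mat_act_def)
  finally show ?thesis .
qed

lemma mat_act_one: "i < n \<Longrightarrow> mat_act (1\<^sub>m n) y i = y i"
  by (simp add: mat_act_def if_distrib[of "\<lambda>c. c *\<^sub>R _"] cong: if_cong)

lemma mat_act_add: "mat_act M (\<lambda>j. y j + z j) i = mat_act M y i + mat_act M z i"
  by (simp add: mat_act_def scaleR_add_right sum.distrib)

lemma mat_act_diff: "mat_act M (\<lambda>j. y j - z j) i = mat_act M y i - mat_act M z i"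
  by (simp add: mat_act_def scaleR_diff_right sum_subtractf)

lemma mat_act_linear: "linear f \<Longrightarrow> f (mat_act M y i) = mat_act M (\<lambda>j. f (y j)) i"
  by (simp add: mat_act_def linear_sum linear_scale)

lemma mat_act_upper_triangular:
  assumes T: "T \<in> carrier_mat N N" and m: "m < N" and lower: "\<And>m'. m' < m \<Longrightarrow> T $$ (m, m') = 0"
  shows "mat_act T y m = T $$ (m, m) *\<^sub>R y m + (\<Sum>m'\<in>{m<..<N}. T $$ (m, m') *\<^sub>R y m')"
proof -
  have "mat_act T y m = (\<Sum>m'\<in>{m..<N}. T $$ (m, m') *\<^sub>R y m')"
    unfolding mat_act_def using T lower by (intro sum.mono_neutral_right) auto
  also have "\<dots> = T $$ (m, m) *\<^sub>R y m + (\<Sum>m'\<in>{Suc m..<N}. T $$ (m, m') *\<^sub>R y m')"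
    using m by (rule sum.atLeast_Suc_lessThan)
  also have "{Suc m..<N} = {m<..<N}" by auto
  finally show ?thesis .
qed

lemma mat_act_eq_mult_mat_vec:
  "A \<in> carrier_mat n n \<Longrightarrow> v \<in> carrier_vec n \<Longrightarrow> i < n \<Longrightarrow> (A *\<^sub>v v) $ i = mat_act A (\<lambda>j. v $ j) i"
  by (simp add: mat_act_def scalar_prod_def atLeast0LessThan)

lemma laplacian_carrier: "laplacian N adj \<in> carrier_mat N N"
  by (simp add: laplacian_def)

lemma dim_laplacian [simp]: "dim_row (laplacian N adj) = N" "dim_col (laplacian N adj) = N"
  by (simp_all add: laplacian_def)

lemma mat_act_laplacian:
  fixes y :: "nat \<Rightarrow> 'b::real_vector"
  assumes irrefl: "adj i i = 0" and i: "i < N"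
  shows "mat_act (laplacian N adj) y i = (\<Sum>j<N. adj i j *\<^sub>R (y i - y j))"
proof -
  have "laplacian N adj $$ (i, j) = (if i = j then (\<Sum>l<N. adj i l) else 0) - adj i j"
    if "j < N" for j
    using that i irrefl by (auto simp: laplacian_def)
  hence "mat_act (laplacian N adj) y i
      = (\<Sum>j<N. (if i = j then (\<Sum>l<N. adj i l) else 0) *\<^sub>R y j) - (\<Sum>j<N. adj i j *\<^sub>R y j)"
    by (simp add: mat_act_def scaleR_diff_left sum_subtractf)
  also have "(\<Sum>j<N. (if i = j then (\<Sum>l<N. adj i l) else 0) *\<^sub>R y j) = (\<Sum>j<N. adj i j *\<^sub>R y i)"
    using i by (simp add: if_distrib[of "\<lambda>c. c *\<^sub>R _"] scaleR_sum_left cong: if_cong)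
  finally show ?thesis by (simp add: scaleR_diff_right sum_subtractf)
qed

lemma laplacian_quadratic_form:
  fixes c :: "nat \<Rightarrow> real"
  assumes irrefl: "\<forall>i<N. adj i i = 0" and sym: "\<forall>i<N. \<forall>j<N. adj i j = adj j i"
  shows "2 * (\<Sum>i<N. c i * mat_act (laplacian N adj) c i)
       = (\<Sum>i<N. \<Sum>j<N. adj i j * (c i - c j)^2)"
proof -
  define S where "S = (\<Sum>i<N. \<Sum>j<N. adj i j * (c i * (c i - c j)))"
  have "(\<Sum>i<N. c i * mat_act (laplacian N adj) c i) = S"
    unfolding S_def using irrefl
    by (intro sum.cong refl) (simp add: mat_act_laplacian sum_distrib_left algebra_simps)
  moreover have "S = (\<Sum>i<N. \<Sum>j<N. adj j i * (c j * (c j - c i)))"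
    unfolding S_def by (rule sum.swap)
  moreover have "\<dots> = (\<Sum>i<N. \<Sum>j<N. adj i j * (c j * (c j - c i)))"
    using sym by (intro sum.cong refl) auto
  ultimately have "2 * (\<Sum>i<N. c i * mat_act (laplacian N adj) c i)
      = (\<Sum>i<N. \<Sum>j<N. adj i j * (c i * (c i - c j))) + (\<Sum>i<N. \<Sum>j<N. adj i j * (c j * (c j - c i)))"
    unfolding S_def by simp
  also have "\<dots> = (\<Sum>i<N. \<Sum>j<N. adj i j * (c i - c j)^2)"
    by (simp add: sum.distrib[symmetric] algebra_simps power2_eq_square)
  finally show ?thesis .
qed

lemma laplacian_quadratic_form_nonneg:
  fixes c :: "nat \<Rightarrow> real"
  assumes irrefl: "\<forall>i<N. adj i i = 0" and sym: "\<forall>i<N. \<forall>j<N. adj i j = adj j i"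
    and nonneg: "\<forall>i<N. \<forall>j<N. 0 \<le> adj i j"
  shows "0 \<le> (\<Sum>i<N. c i * mat_act (laplacian N adj) c i)"
proof -
  have "0 \<le> (\<Sum>i<N. \<Sum>j<N. adj i j * (c i - c j)^2)" using nonneg by (intro sum_nonneg) simp
  thus ?thesis using laplacian_quadratic_form[OF irrefl sym, of c] by simp
qed

lemma laplacian_eigenvalue_nonneg:
  assumes irrefl: "\<forall>i<N. adj i i = 0" and sym: "\<forall>i<N. \<forall>j<N. adj i j = adj j i"
    and nonneg: "\<forall>i<N. \<forall>j<N. 0 \<le> adj i j" and ev: "eigenvalue (laplacian N adj) \<mu>"
  shows "0 \<le> \<mu>"
proof -
  let ?L = "laplacian N adj"
  obtain v where "eigenvector ?L v \<mu>" using ev unfolding eigenvalue_def by blast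
  hence v: "v \<in> carrier_vec N" and v0: "v \<noteq> 0\<^sub>v N" and Lv: "?L *\<^sub>v v = \<mu> \<cdot>\<^sub>v v"
    unfolding eigenvector_def by auto
  define c where "c k = v $ k" for k
  have "mat_act ?L c k = \<mu> * c k" if "k < N" for k
  proof -
    have "mat_act ?L c k = (?L *\<^sub>v v) $ k"
      unfolding c_def by (rule mat_act_eq_mult_mat_vec[OF laplacian_carrier v that, symmetric])
    thus ?thesis using Lv v that by (simp add: c_def)
  qed
  hence "(\<Sum>k<N. c k * mat_act ?L c k) = \<mu> * (\<Sum>k<N. c k^2)"
    by (simp add: sum_distrib_left power2_eq_square algebra_simps)
  moreover have "0 \<le> (\<Sum>k<N. c k * mat_act ?L c k)"
    by (rule laplacian_quadratic_form_nonneg[OF irrefl sym nonneg])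
  moreover have "0 < (\<Sum>k<N. c k^2)"
  proof -
    obtain k where "k < N" "v $ k \<noteq> 0"
      using v v0 by (metis carrier_vecD eq_vecI index_zero_vec(1,2))
    thus ?thesis by (intro sum_pos2[of _ k]) (simp_all add: c_def)
  qed
  ultimately show ?thesis by (simp add: zero_le_mult_iff)
qed

lemma laplacian_eigenvalue_zero:
  assumes irrefl: "\<forall>i<N. adj i i = 0" and N: "0 < N"
  shows "eigenvalue (laplacian N adj) 0"
proof -
  define v where "v = Matrix.vec N (\<lambda>_. 1::real)"
  have v: "v \<in> carrier_vec N" unfolding v_def by simp
  have "laplacian N adj *\<^sub>v v = 0 \<cdot>\<^sub>v v"
  proof (rule eq_vecI)
    fix k assume "k < dim_vec (0 \<cdot>\<^sub>v v)"
    hence k: "k < N" using v by simp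
    have "(laplacian N adj *\<^sub>v v) $ k = mat_act (laplacian N adj) (\<lambda>_. 1::real) k"
      using mat_act_eq_mult_mat_vec[OF laplacian_carrier v k] k by (simp add: v_def mat_act_def)
    thus "(laplacian N adj *\<^sub>v v) $ k = (0 \<cdot>\<^sub>v v) $ k"
      using mat_act_laplacian[of adj k N "\<lambda>_. 1::real"] irrefl k v by simp
  qed (use v in simp)
  moreover have "v \<noteq> 0\<^sub>v N" using N unfolding v_def by (metis index_vec index_zero_vec(1) one_neq_zero)
  ultimately show ?thesis
    using v unfolding eigenvalue_def eigenvector_def by auto
qed

lemma laplacian_eigenvalues:
  assumes irrefl: "\<forall>i<N. adj i i = 0" and sym: "\<forall>i<N. \<forall>j<N. adj i j = adj j i"
    and nonneg: "\<forall>i<N. \<forall>j<N. 0 \<le> adj i j"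
    and eig: "char_poly (laplacian N adj) = (\<Prod>i<N. [:- lam i, 1:])"
    and sorted: "\<forall>i j. i \<le> j \<and> j < N \<longrightarrow> lam i \<le> lam j" and N: "0 < N"
  shows "lam 0 = 0" and "\<And>i. i < N \<Longrightarrow> 0 \<le> lam i"
proof -
  have eigenvalue_iff: "eigenvalue (laplacian N adj) x \<longleftrightarrow> (\<exists>i<N. x = lam i)" for x
    using eigenvalue_root_char_poly[OF laplacian_carrier] by (auto simp: eig poly_prod)
  show nonneg_lam: "0 \<le> lam i" if "i < N" for i
    using laplacian_eigenvalue_nonneg[OF irrefl sym nonneg] eigenvalue_iff that by blast
  obtain j where "j < N" "lam j = 0"
    using laplacian_eigenvalue_zero[where N = N and adj = adj, OF irrefl N] eigenvalue_iff by auto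
  thus "lam 0 = 0" using sorted nonneg_lam[OF N] by force
qed

lemma laplacian_kernel_constant:
  fixes c :: "nat \<Rightarrow> real"
  assumes irrefl: "\<forall>i<N. adj i i = 0" and sym: "\<forall>i<N. \<forall>j<N. adj i j = adj j i"
    and nonneg: "\<forall>i<N. \<forall>j<N. 0 \<le> adj i j" and conn: "graph_connected N adj"
    and kernel: "\<And>i. i < N \<Longrightarrow> mat_act (laplacian N adj) c i = 0"
    and i: "i < N" and j: "j < N"
  shows "c i = c j"
proof -
  have terms_nonneg: "0 \<le> adj a b * (c a - c b)^2" if "a < N" "b < N" for a b
    using nonneg that by simp
  have "(\<Sum>a<N. \<Sum>b<N. adj a b * (c a - c b)^2) = 0"
    using laplacian_quadratic_form[OF irrefl sym, of c] kernel by simp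
  hence rows: "(\<Sum>b<N. adj a b * (c a - c b)^2) = 0" if "a < N" for a
    using sum_nonneg_eq_0_iff[of "{..<N}" "\<lambda>a. \<Sum>b<N. adj a b * (c a - c b)^2"] terms_nonneg that
    by (auto intro: sum_nonneg)
  have zero: "adj a b * (c a - c b)^2 = 0" if "a < N" "b < N" for a b
    using sum_nonneg_eq_0_iff[of "{..<N}" "\<lambda>b. adj a b * (c a - c b)^2"] rows terms_nonneg that
    by auto
  have edge: "c a = c b" if "(a, b) \<in> {(a, b). a < N \<and> b < N \<and> adj a b = 1}" for a b
    using that zero[of a b] by simp
  have "(i, j) \<in> {(a, b). a < N \<and> b < N \<and> adj a b = 1}\<^sup>*"
    using conn i j unfolding graph_connected_def by blast
  thus ?thesis by (induction rule: rtrancl_induct) (simp_all add: edge)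
qed

lemma laplacian_eigenvector_column_constant:
  assumes irrefl: "\<forall>i<N. adj i i = 0" and sym: "\<forall>i<N. \<forall>j<N. adj i j = adj j i"
    and nonneg: "\<forall>i<N. \<forall>j<N. 0 \<le> adj i j" and conn: "graph_connected N adj"
    and P: "P \<in> carrier_mat N N" and T: "T \<in> carrier_mat N N"
    and LP: "laplacian N adj * P = P * T" and column: "\<And>m. m < N \<Longrightarrow> T $$ (m, 0) = 0"
    and i: "i < N" and j: "j < N"
  shows "P $$ (i, 0) = P $$ (j, 0)"
proof (rule laplacian_kernel_constant[OF irrefl sym nonneg conn _ i j])
  fix a assume a: "a < N"
  have N: "0 < N" using i by simp
  have "mat_act (laplacian N adj) (\<lambda>k. P $$ (k, 0)) a = (laplacian N adj * P) $$ (a, 0)"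
    by (rule index_mult_mat_eq_mat_act[OF laplacian_carrier P a N, symmetric])
  also have "\<dots> = mat_act P (\<lambda>m. T $$ (m, 0)) a"
    unfolding LP by (rule index_mult_mat_eq_mat_act[OF P T a N])
  also have "\<dots> = 0"
    using column P by (simp add: mat_act_def)
  finally show "mat_act (laplacian N adj) (\<lambda>k. P $$ (k, 0)) a = 0" .
qed

lemma schur_triangularization:
  fixes A :: "'a::conjugatable_ordered_field mat"
  assumes A: "A \<in> carrier_mat N N" and eig: "char_poly A = (\<Prod>i<N. [:- lam i, 1:])"
  obtains P Q T where "P \<in> carrier_mat N N" "Q \<in> carrier_mat N N" "T \<in> carrier_mat N N"
    "P * Q = 1\<^sub>m N" "Q * A = T * Q" "A * P = P * T"
    "\<And>m. m < N \<Longrightarrow> T $$ (m, m) = lam m" "\<And>m m'. m < N \<Longrightarrow> m' < m \<Longrightarrow> T $$ (m, m') = 0"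
proof -
  define es where "es = map lam [0..<N]"
  have "(\<Prod>a\<leftarrow>es. [:- a, 1:]) = (\<Prod>i\<leftarrow>[0..<N]. [:- lam i, 1:])"
    unfolding es_def by (simp add: o_def)
  also have "\<dots> = (\<Prod>i\<in>set [0..<N]. [:- lam i, 1:])"
    by (rule prod.distinct_set_conv_list[symmetric]) simp
  finally have cp: "char_poly A = (\<Prod>a\<leftarrow>es. [:- a, 1:])" by (simp add: eig atLeast0LessThan)
  obtain T P Q where "schur_decomposition A es = (T, P, Q)" by (cases "schur_decomposition A es") auto
  from schur_decomposition[OF A cp this]
  have sim: "similar_mat_wit A T P Q" and ut: "upper_triangular T" and dg: "diag_mat T = es" by auto
  from similar_mat_witD2[OF A sim]
  have T: "T \<in> carrier_mat N N" and P: "P \<in> carrier_mat N N" and Q: "Q \<in> carrier_mat N N"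
    and PQ: "P * Q = 1\<^sub>m N" and QP: "Q * P = 1\<^sub>m N" and APTQ: "A = P * T * Q" by auto
  have "Q * A = (Q * P) * T * Q" unfolding APTQ using P Q T by (simp add: assoc_mult_mat[of _ N N _ N _ N])
  hence "Q * A = T * Q" using QP T Q by simp
  moreover have "A * P = P * T * (Q * P)"
    unfolding APTQ using P Q T by (simp add: assoc_mult_mat[of _ N N _ N _ N])
  hence "A * P = P * T" using QP T P by simp
  moreover have "T $$ (m, m) = lam m" if "m < N" for m
  proof -
    have "diag_mat T ! m = es ! m" using dg by simp
    thus ?thesis using that T unfolding diag_mat_def es_def by simp
  qed
  moreover have "T $$ (m, m') = 0" if "m < N" "m' < m" for m m'
    using ut that T unfolding upper_triangular_def by auto
  ultimately show ?thesis using that P Q T PQ by blast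
qed

lemma laplacian_schur_form:
  assumes irrefl: "\<forall>i<N. adj i i = 0" and sym: "\<forall>i<N. \<forall>j<N. adj i j = adj j i"
    and nonneg: "\<forall>i<N. \<forall>j<N. 0 \<le> adj i j" and conn: "graph_connected N adj"
    and eig: "char_poly (laplacian N adj) = (\<Prod>i<N. [:- lam i, 1:])"
    and sorted: "\<forall>i j. i \<le> j \<and> j < N \<longrightarrow> lam i \<le> lam j" and N: "0 < N"
  obtains P Q T where "P \<in> carrier_mat N N" "Q \<in> carrier_mat N N" "T \<in> carrier_mat N N"
    "P * Q = 1\<^sub>m N" "Q * laplacian N adj = T * Q"
    "\<And>m. m < N \<Longrightarrow> T $$ (m, m) = lam m" "\<And>m m'. m < N \<Longrightarrow> m' < m \<Longrightarrow> T $$ (m, m') = 0"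
    "\<And>i j. i < N \<Longrightarrow> j < N \<Longrightarrow> P $$ (i, 0) = P $$ (j, 0)"
proof -
  obtain P Q T where P: "P \<in> carrier_mat N N" and Q: "Q \<in> carrier_mat N N"
    and T: "T \<in> carrier_mat N N" and PQ: "P * Q = 1\<^sub>m N" and QL: "Q * laplacian N adj = T * Q"
    and LP: "laplacian N adj * P = P * T" and diag: "\<And>m. m < N \<Longrightarrow> T $$ (m, m) = lam m"
    and upper: "\<And>m m'. m < N \<Longrightarrow> m' < m \<Longrightarrow> T $$ (m, m') = 0"
    using schur_triangularization[OF laplacian_carrier eig] by blast
  have "T $$ (m, 0) = 0" if "m < N" for m
    using that diag[of 0] laplacian_eigenvalues(1)[OF irrefl sym nonneg eig sorted N] upper[of m 0]
    by (cases m) simp_all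
  hence "P $$ (i, 0) = P $$ (j, 0)" if "i < N" "j < N" for i j
    using laplacian_eigenvector_column_constant[OF irrefl sym nonneg conn P T LP _ that] by blast
  with that P Q T PQ QL diag upper show ?thesis by blast
qed

section \<open>Modal decomposition of the agents\<close>

locale formation_system =
  fixes N \<tau> :: nat and h \<alpha> \<beta> :: real and adj :: "nat \<Rightarrow> nat \<Rightarrow> real"
    and x w :: "nat \<Rightarrow> nat \<Rightarrow> 'a::euclidean_space \<times> 'a"
  assumes tau_pos: "0 < \<tau>" and h_pos: "h > 0" and alpha_pos: "\<alpha> > 0" and beta_pos: "\<beta> > 0"
    and adj_irrefl: "\<forall>i<N. adj i i = 0"
    and noise: "\<And>i. i < N \<Longrightarrow> Bseq (w i)"
    and dyn: "\<forall>i<N. \<forall>k. x i (Suc k) = Amap h (x i k) + Bmap h (ctrl N adj \<alpha> \<beta> \<tau> h x i k) + w i k"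
begin

definition mode :: "real mat \<Rightarrow> nat \<Rightarrow> nat \<Rightarrow> 'a \<times> 'a" where
  "mode Q m k = mat_act Q (\<lambda>l. x l k) m"

lemma prediction_mode: "prediction \<tau> h (mode Q m) k = mat_act Q (\<lambda>l. prediction \<tau> h (x l) k) m"
  by (simp add: prediction_def mode_def mat_act_linear[OF linear_Amap_pow])

lemma mode_step:
  assumes Q: "Q \<in> carrier_mat N N" and T: "T \<in> carrier_mat N N"
    and QL: "Q * laplacian N adj = T * Q"
    and m: "m < N" and lower: "\<And>m'. m' < m \<Longrightarrow> T $$ (m, m') = 0"
  shows "mode Q m (Suc k) = Amap h (mode Q m k)
      - T $$ (m, m) *\<^sub>R Bmap h (Kmap \<alpha> \<beta> (prediction \<tau> h (mode Q m) k))
      + (mat_act Q (\<lambda>l. w l k) m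
         - (\<Sum>m'\<in>{m<..<N}. T $$ (m, m') *\<^sub>R Bmap h (Kmap \<alpha> \<beta> (prediction \<tau> h (mode Q m') k))))"
proof -
  define F where "F s = Bmap h (Kmap \<alpha> \<beta> s)" for s :: "'a \<times> 'a"
  have F: "linear F" unfolding F_def using bounded_linear_feedback by (rule bounded_linear.linear)
  let ?L = "laplacian N adj" and ?xh = "\<lambda>j. prediction \<tau> h (x j) k"
  have control: "Bmap h (ctrl N adj \<alpha> \<beta> \<tau> h x l k) = - F (mat_act ?L ?xh l)" if "l < N" for l
  proof -
    have "(\<Sum>j<N. adj l j *\<^sub>R (xhat \<tau> h x j k - xhat \<tau> h x l k)) = - mat_act ?L ?xh l"
      using mat_act_laplacian[of adj l N ?xh] adj_irrefl that
      by (simp add: xhat_eq_prediction sum_negf[symmetric] scaleR_diff_right)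
    thus ?thesis unfolding ctrl_def F_def[symmetric] by (simp add: linear_neg[OF F])
  qed
  have "mode Q m (Suc k) = mat_act Q (\<lambda>l. Amap h (x l k) + - F (mat_act ?L ?xh l) + w l k) m"
    unfolding mode_def mat_act_def[of Q] using dyn control Q by (intro sum.cong) auto
  also have "\<dots> = Amap h (mode Q m k) - F (mat_act Q (mat_act ?L ?xh) m) + mat_act Q (\<lambda>l. w l k) m"
    by (simp add: mat_act_add mat_act_diff mode_def mat_act_linear[OF linear_Amap, symmetric]
        mat_act_linear[OF F, symmetric])
  also have "mat_act Q (mat_act ?L ?xh) m = mat_act T (\<lambda>m'. prediction \<tau> h (mode Q m') k) m"
  proof -
    have "mat_act Q (mat_act ?L ?xh) m = mat_act (Q * ?L) ?xh m"
      by (rule mat_act_mult[OF Q laplacian_carrier m, symmetric])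
    also have "\<dots> = mat_act T (mat_act Q ?xh) m"
      unfolding QL by (rule mat_act_mult[OF T Q m])
    finally show ?thesis by (simp add: prediction_mode)
  qed
  also have "\<dots> = T $$ (m, m) *\<^sub>R prediction \<tau> h (mode Q m) k
      + (\<Sum>m'\<in>{m<..<N}. T $$ (m, m') *\<^sub>R prediction \<tau> h (mode Q m') k)"
    by (rule mat_act_upper_triangular[OF T m lower])
  finally show ?thesis
    by (simp add: F_def[symmetric] linear_add[OF F] linear_sum[OF F] linear_scale[OF F] algebra_simps)
qed

lemma modes_Bseq:
  assumes Q: "Q \<in> carrier_mat N N" and T: "T \<in> carrier_mat N N"
    and QL: "Q * laplacian N adj = T * Q"
    and upper: "\<And>m m'. m < N \<Longrightarrow> m' < m \<Longrightarrow> T $$ (m, m') = 0"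
    and stable: "\<And>m. m \<in> {1..<N} \<Longrightarrow> 0 < T $$ (m, m) \<and> phi1 (T $$ (m, m)) \<alpha> \<beta> h \<tau> > 0
        \<and> phi2 (T $$ (m, m)) \<alpha> \<beta> h \<tau> > 0 \<and> phi3 (T $$ (m, m)) \<alpha> \<beta> h \<tau> > 0"
  shows "m \<in> {1..<N} \<Longrightarrow> Bseq (mode Q m)"
proof (induction "N - m" arbitrary: m rule: less_induct)
  case less
  hence m: "m < N" by simp
  have higher: "Bseq (mode Q m')" if "m' \<in> {m<..<N}" for m'
    using less.hyps[of m'] less.prems that by auto
  have "Bseq (\<lambda>k. mat_act Q (\<lambda>l. w l k) m)"
    unfolding mat_act_def using Q noise by (intro Bseq_sum Bseq_scaleR) auto
  hence "Bseq (\<lambda>k. mat_act Q (\<lambda>l. w l k) m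
      - (\<Sum>m'\<in>{m<..<N}. T $$ (m, m') *\<^sub>R Bmap h (Kmap \<alpha> \<beta> (prediction \<tau> h (mode Q m') k))))"
    using higher by (intro Bseq_diff Bseq_sum Bseq_scaleR Bseq_bounded_linear[OF bounded_linear_feedback]
        Bseq_prediction[OF tau_pos]) auto
  moreover have "0 < T $$ (m, m)" "phi1 (T $$ (m, m)) \<alpha> \<beta> h \<tau> > 0"
    "phi2 (T $$ (m, m)) \<alpha> \<beta> h \<tau> > 0" "phi3 (T $$ (m, m)) \<alpha> \<beta> h \<tau> > 0"
    using stable[OF less.prems] by auto
  ultimately show ?case
    using Bseq_feedback_mode[OF tau_pos h_pos alpha_pos beta_pos _ _ _ _ mode_step[OF Q T QL m upper[OF m]]]
    by blast
qed

lemma disagreement_Bseq: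
  assumes P: "P \<in> carrier_mat N N" and Q: "Q \<in> carrier_mat N N" and PQ: "P * Q = 1\<^sub>m N"
    and consensus: "\<And>i j. i < N \<Longrightarrow> j < N \<Longrightarrow> P $$ (i, 0) = P $$ (j, 0)"
    and modes: "\<And>m. m \<in> {1..<N} \<Longrightarrow> Bseq (mode Q m)"
    and i: "i < N" and j: "j < N"
  shows "Bseq (\<lambda>k. x i k - x j k)"
proof -
  have x: "x l k = mat_act P (\<lambda>m. mode Q m k) l" if "l < N" for l k
  proof -
    have "x l k = mat_act (P * Q) (\<lambda>l. x l k) l"
      unfolding PQ by (rule mat_act_one[OF that, symmetric])
    thus ?thesis using mat_act_mult[OF P Q that] by (simp add: mode_def)
  qed
  have "x i k - x j k = (\<Sum>m\<in>{1..<N}. (P $$ (i, m) - P $$ (j, m)) *\<^sub>R mode Q m k)" for k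
  proof -
    have "x i k - x j k = (\<Sum>m<N. (P $$ (i, m) - P $$ (j, m)) *\<^sub>R mode Q m k)"
      using P by (simp add: x[OF i] x[OF j] mat_act_def scaleR_diff_left sum_subtractf)
    also have "\<dots> = (\<Sum>m\<in>{1..<N}. (P $$ (i, m) - P $$ (j, m)) *\<^sub>R mode Q m k)"
      using consensus[OF i j] by (intro sum.mono_neutral_right) (auto simp: Suc_le_eq)
    finally show ?thesis .
  qed
  moreover have "Bseq (\<lambda>k. \<Sum>m\<in>{1..<N}. (P $$ (i, m) - P $$ (j, m)) *\<^sub>R mode Q m k)"
    using modes by (intro Bseq_sum Bseq_scaleR) auto
  ultimately show ?thesis by simp
qed

end

lemma phi3_at_zero: "phi3 0 \<alpha> \<beta> h t = 0"
  by (simp add: phi3_def abar0_def abar1_def abar2_def abar3_def abar4_def Let_def)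

theorem theorem2:
  fixes N :: nat and h \<alpha> \<beta> :: real and \<tau> :: nat
    and adj :: "nat \<Rightarrow> nat \<Rightarrow> real" and lam :: "nat \<Rightarrow> real"
    and rwp rwv :: "nat \<Rightarrow> real"
    and x w :: "nat \<Rightarrow> nat \<Rightarrow> 'a::euclidean_space \<times> 'a"
  assumes N2: "N \<ge> 2" and hpos: "h > 0" and tau_pos: "\<tau> \<ge> 1"
    and alpha_pos: "\<alpha> > 0" and beta_pos: "\<beta> > 0"
    and adj01: "\<forall>i<N. \<forall>j<N. adj i j = 0 \<or> adj i j = 1"
    and adj_sym: "\<forall>i<N. \<forall>j<N. adj i j = adj j i"
    and adj_irrefl: "\<forall>i<N. adj i i = 0"
    and eig: "char_poly (laplacian N adj) = (\<Prod>i<N. [:- lam i, 1:])"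
    and eig_sorted: "\<forall>i j. i \<le> j \<and> j < N \<longrightarrow> lam i \<le> lam j"
    and conn: "graph_connected N adj"
    and phi_pos: "\<forall>i\<in>{1..<N}.
        phi1 (lam i) \<alpha> \<beta> h (real \<tau>) > 0 \<and> phi2 (lam i) \<alpha> \<beta> h (real \<tau>) > 0
        \<and> phi3 (lam i) \<alpha> \<beta> h (real \<tau>) > 0"
    and noise: "\<forall>i<N. \<forall>k. norm (fst (w i k)) \<le> rwp i \<and> norm (snd (w i k)) \<le> rwv i"
    and dyn: "\<forall>i<N. \<forall>k. x i (Suc k) =
        Amap h (x i k) + Bmap h (ctrl N adj \<alpha> \<beta> \<tau> h x i k) + w i k"
  shows "\<forall>i<N. \<forall>j<N. \<exists>M. \<forall>k. norm (x i k - x j k) \<le> M"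
proof -
  have nonneg: "\<forall>i<N. \<forall>j<N. 0 \<le> adj i j" using adj01 by force
  have "Bseq (w i)" if "i < N" for i
    using noise that by (intro Bseq_prod_bounded[of _ "rwp i" "rwv i"]) auto
  then interpret formation_system N \<tau> h \<alpha> \<beta> adj x w
    using tau_pos hpos alpha_pos beta_pos adj_irrefl dyn by unfold_locales auto
  obtain P Q T where P: "P \<in> carrier_mat N N" and Q: "Q \<in> carrier_mat N N"
    and T: "T \<in> carrier_mat N N" and PQ: "P * Q = 1\<^sub>m N" and QL: "Q * laplacian N adj = T * Q"
    and diag: "\<And>m. m < N \<Longrightarrow> T $$ (m, m) = lam m"
    and upper: "\<And>m m'. m < N \<Longrightarrow> m' < m \<Longrightarrow> T $$ (m, m') = 0"
    and consensus: "\<And>i j. i < N \<Longrightarrow> j < N \<Longrightarrow> P $$ (i, 0) = P $$ (j, 0)"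
    using laplacian_schur_form[OF adj_irrefl adj_sym nonneg conn eig eig_sorted] N2 by auto
  \<comment> \<open>\<open>phi3\<close> vanishes at gain \<open>0\<close>, so the stability hypothesis already forces \<open>lam m > 0\<close> for
    \<open>m \<ge> 1\<close>; connectivity is needed only for the consensus direction.\<close>
  have lam_pos: "0 < lam m" if "m \<in> {1..<N}" for m
  proof -
    have "lam m \<noteq> 0" using phi_pos that phi3_at_zero[of \<alpha> \<beta> h "real \<tau>"] by fastforce
    thus ?thesis
      using laplacian_eigenvalues(2)[OF adj_irrefl adj_sym nonneg eig eig_sorted _, of m] that by simp
  qed
  have stable: "0 < T $$ (m, m) \<and> phi1 (T $$ (m, m)) \<alpha> \<beta> h \<tau> > 0
      \<and> phi2 (T $$ (m, m)) \<alpha> \<beta> h \<tau> > 0 \<and> phi3 (T $$ (m, m)) \<alpha> \<beta> h \<tau> > 0"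
    if "m \<in> {1..<N}" for m
    using lam_pos[OF that] that phi_pos diag[of m] by auto
  have modes: "Bseq (mode Q m)" if "m \<in> {1..<N}" for m
    by (rule modes_Bseq[OF Q T QL upper stable that])
  show ?thesis
  proof (intro allI impI)
    fix i j assume "i < N" "j < N"
    from disagreement_Bseq[OF P Q PQ consensus modes this] show "\<exists>M. \<forall>k. norm (x i k - x j k) \<le> M" by (auto simp: Bseq_def)
  qed
qed

end
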